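(* Let $k \ge 2$. For any $n, m \in \mathbb{N}$ with $1 \le m \le n$, we have $n - o_n(m) = \mathcal{G}(nk - m)$.
   Context: Josephus problem: the numbers $1,2,\dots,n$ are arranged in a circle; starting the count at $1$, every $k$-th number still present is removed (counting resumes with the next remaining number after each removal) until one number remains. For $1 \le m \le n$, $o_n(m)=i$ if $m$ is the $i$-th number removed ($1 \le i \le n-1$), and $o_n(m)=n$ if $m$ is the number that remains. Maximum Nim with rule function $f(x)=\lfloor x/k\rfloor$: a position is a pile of $x \ge 0$ stones, and from $x$ one may move to $x-u$ for any integer $u$ with $1 \le u \le \lfloor x/k \rfloor$. The Grundy number is defined recursively by $\mathcal{G}(x) = \mathrm{mex}\{\mathcal{G}(x-u) : 1 \le u \le \lfloor x/k\rfloor\}$, where $\mathrm{mex}(S)$ is the least non-negative integer not in $S$ (so $\mathcal{G}(x)=0$ when $\lfloor x/k\rfloor = 0$). *)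

theory Defs
  imports Main
begin

text \<open>The list holds the remaining numbers in circular order,
  starting with the number at which the next count begins.\<close>

function jos_removed :: "nat \<Rightarrow> nat list \<Rightarrow> nat list" where
  "jos_removed k xs =
     (if length xs \<le> 1 then []
      else (let i = (k - 1) mod length xs
            in xs ! i # jos_removed k (drop (Suc i) xs @ take i xs)))"
  by pat_completeness auto
termination
proof (relation "measure (\<lambda>(k, xs). length xs)")
  show "wf (measure (\<lambda>(k, xs). length xs))" by simp
next
  fix k :: nat and xs :: "nat list" and i
  assume h: "\<not> length xs \<le> 1" and i: "i = (k - 1) mod length xs"
  then have "length xs > 0" by (cases xs) auto
  then have "i < length xs" using i by simp
  then show "((k, drop (Suc i) xs @ take i xs), k, xs) \<in> measure (\<lambda>(k, xs). length xs)"
    by simp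
qed

definition jos_order :: "nat \<Rightarrow> nat \<Rightarrow> nat \<Rightarrow> nat" where
  "jos_order k n m =
     (let r = jos_removed k [1..<Suc n]
      in if m \<in> set r then Suc (LEAST i. i < length r \<and> r ! i = m) else n)"

definition mex :: "nat set \<Rightarrow> nat" where
  "mex S = (LEAST n. n \<notin> S)"

text \<open>Grundy number of Maximum Nim with rule function f(x) = floor(x/k).\<close>
function grundy :: "nat \<Rightarrow> nat \<Rightarrow> nat" where
  "grundy k x = mex ((\<lambda>u. grundy k (x - u)) ` {u. 1 \<le> u \<and> u \<le> x div k})"
  by pat_completeness auto
termination
proof (relation "measure (\<lambda>(k, x). x)")
  show "wf (measure (\<lambda>(k, x). x))" by simp
next
  fix k x u :: nat
  assume "u \<in> {u. 1 \<le> u \<and> u \<le> x div k}"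
  then have "1 \<le> u" "u \<le> x div k" by auto
  moreover have "x div k \<le> x" by (rule div_le_dividend)
  ultimately have "1 \<le> u" "u \<le> x" by linarith+
  then show "((k, x - u), k, x) \<in> measure (\<lambda>(k, x). x)" by simp
qed

end

theory Submission imports Defs begin

text \<open>For every x the Grundy values on the window {x - x div k..x} form a permutation of
  {0..x div k}. Passing from x to x + 1, either the window keeps its length, and the new value is
  the one of the position dropped from the window, or (exactly when k divides x + 1) the window
  grows and the new value is the new maximum (x + 1) div k.
  Listing the window values from x downwards, crossing a block of k consecutive positions thus
  rotates the list by k - 1 and prepends the new maximum; read backwards, this is one step of the
  Josephus elimination. The list at n k - 1 is G(n k - 1), ..., G(n k - n), so the numbers are
  removed in the order of decreasing Grundy values n - 1, ..., 1, and the survivor has value 0.\<close>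

declare jos_removed.simps[simp del] grundy.simps[simp del]

section \<open>Grundy numbers of Maximum Nim\<close>

lemma mex_atLeastLessThan: "mex {0..<a} = a"
  unfolding mex_def by (rule Least_equality) auto

lemma mex_atLeastAtMost_remove: "b \<le> a \<Longrightarrow> mex ({0..a} - {b}) = b"
  unfolding mex_def by (rule Least_equality) auto

lemma grundy_eq_mex_window: "grundy k x = mex (grundy k ` {x - x div k..<x})"
proof -
  have "(\<lambda>u. x - u) ` {u. 1 \<le> u \<and> u \<le> x div k} = {x - x div k..<x}"
  proof (intro equalityI subsetI)
    fix y assume "y \<in> {x - x div k..<x}"
    then have "x - y \<in> {u. 1 \<le> u \<and> u \<le> x div k}" "y = x - (x - y)" by auto
    then show "y \<in> (\<lambda>u. x - u) ` {u. 1 \<le> u \<and> u \<le> x div k}" by blast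
  next
    fix y assume "y \<in> (\<lambda>u. x - u) ` {u. 1 \<le> u \<and> u \<le> x div k}"
    then obtain u where "1 \<le> u" "u \<le> x div k" "y = x - u" by blast
    moreover have "x div k \<le> x" by (rule div_le_dividend)
    ultimately have "x - x div k \<le> y" "y < x" by linarith+
    then show "y \<in> {x - x div k..<x}" by simp
  qed
  then have "(\<lambda>u. grundy k (x - u)) ` {u. 1 \<le> u \<and> u \<le> x div k} = grundy k ` {x - x div k..<x}"
    by (metis image_image)
  then show ?thesis by (subst grundy.simps) simp
qed

lemma grundy_0: "grundy k 0 = 0"
  using grundy_eq_mex_window[of k 0] mex_atLeastLessThan[of 0] by simp

lemma grundy_Suc_same_quotient:
  assumes bij: "bij_betw (grundy k) {x - x div k..x} {0..x div k}"
    and q: "Suc x div k = x div k"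
  shows "grundy k (Suc x) = grundy k (x - x div k)"
proof -
  have v: "grundy k (x - x div k) \<in> {0..x div k}"
    using bij by (rule bij_betw_apply) simp
  have "Suc x - x div k = Suc (x - x div k)"
    using Suc_diff_le div_le_dividend by blast
  then have "{Suc x - Suc x div k..<Suc x} = {x - x div k..x} - {x - x div k}"
    using q by auto
  moreover have "bij_betw (grundy k) ({x - x div k..x} - {x - x div k}) ({0..x div k} - {grundy k (x - x div k)})"
    using bij by (rule bij_betw_DiffI) (use v in auto)
  then have "grundy k ` ({x - x div k..x} - {x - x div k}) = {0..x div k} - {grundy k (x - x div k)}"
    by (rule bij_betw_imp_surj_on)
  ultimately show ?thesis
    using v by (simp add: grundy_eq_mex_window[of k "Suc x"] mex_atLeastAtMost_remove)
qed

lemma bij_betw_grundy_window_Suc_same_quotient: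
  assumes bij: "bij_betw (grundy k) {x - x div k..x} {0..x div k}"
    and q: "Suc x div k = x div k"
  shows "bij_betw (grundy k) {Suc x - Suc x div k..Suc x} {0..Suc x div k}"
proof -
  let ?W = "{x - x div k..x} - {x - x div k}" and ?v = "grundy k (x - x div k)"
  have v: "?v \<in> {0..x div k}"
    using bij by (rule bij_betw_apply) simp
  have "Suc x - x div k = Suc (x - x div k)"
    using Suc_diff_le div_le_dividend by blast
  then have window: "{Suc x - Suc x div k..Suc x} = ?W \<union> {Suc x}"
    using q by auto
  have window_values: "{0..Suc x div k} = ({0..x div k} - {?v}) \<union> {?v}"
    using q v by auto
  have "bij_betw (grundy k) ?W ({0..x div k} - {?v})"
    using bij by (rule bij_betw_DiffI) (use v in auto)
  then show ?thesis
    unfolding window window_values grundy_Suc_same_quotient[OF bij q, symmetric]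
    by (intro notIn_Un_bij_betw) (auto simp: grundy_Suc_same_quotient[OF bij q])
qed

lemma grundy_Suc_new_quotient:
  assumes bij: "bij_betw (grundy k) {x - x div k..x} {0..x div k}"
    and q: "Suc x div k = Suc (x div k)"
  shows "grundy k (Suc x) = Suc (x div k)"
proof -
  have "{Suc x - Suc x div k..<Suc x} = {x - x div k..x}"
    using q by auto
  then show ?thesis
    using bij mex_atLeastLessThan[of "Suc (x div k)"]
    by (simp add: grundy_eq_mex_window[of k "Suc x"] bij_betw_def atLeastLessThanSuc_atLeastAtMost)
qed

lemma bij_betw_grundy_window_Suc_new_quotient:
  assumes bij: "bij_betw (grundy k) {x - x div k..x} {0..x div k}"
    and q: "Suc x div k = Suc (x div k)"
  shows "bij_betw (grundy k) {Suc x - Suc x div k..Suc x} {0..Suc x div k}"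
proof -
  have "{Suc x - Suc x div k..Suc x} = {x - x div k..x} \<union> {Suc x}"
    using q by auto
  moreover have "{0..Suc x div k} = {0..x div k} \<union> {grundy k (Suc x)}"
    using q grundy_Suc_new_quotient[OF bij q] by auto
  ultimately show ?thesis
    using notIn_Un_bij_betw[OF _ _ bij, of "Suc x"] grundy_Suc_new_quotient[OF bij q] by simp
qed

lemma bij_betw_grundy_window: "bij_betw (grundy k) {x - x div k..x} {0..x div k}"
proof (induction x)
  case 0
  show ?case by (simp add: grundy_0 bij_betw_def)
next
  case (Suc x)
  have "Suc x div k = x div k \<or> Suc x div k = Suc (x div k)"
    by (cases "k = 0") (auto simp: div_Suc)
  then show ?case
    using bij_betw_grundy_window_Suc_same_quotient[OF Suc]
      bij_betw_grundy_window_Suc_new_quotient[OF Suc] by blast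
qed

lemma grundy_multiple: "k dvd x \<Longrightarrow> grundy k x = x div k"
proof (cases x)
  case (Suc y)
  moreover assume "k dvd x"
  ultimately have "Suc y div k = Suc (y div k)"
    by (cases "k = 0") (auto simp: div_Suc)
  then show ?thesis
    using Suc grundy_Suc_new_quotient[OF bij_betw_grundy_window] by simp
qed (simp add: grundy_0)

lemma Suc_div_not_dvd: "\<not> k dvd Suc y \<Longrightarrow> Suc y div k = y div k"
  by (simp add: div_Suc dvd_eq_mod_eq_0)

lemma grundy_Suc_not_dvd: "\<not> k dvd Suc y \<Longrightarrow> grundy k (Suc y) = grundy k (y - y div k)"
  using grundy_Suc_same_quotient[OF bij_betw_grundy_window] Suc_div_not_dvd by blast

definition grundy_window :: "nat \<Rightarrow> nat \<Rightarrow> nat list" where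
  "grundy_window k x = map (\<lambda>d. grundy k (x - d)) [0..<Suc (x div k)]"

lemma length_grundy_window: "length (grundy_window k x) = Suc (x div k)"
  by (simp add: grundy_window_def)

lemma nth_grundy_window: "d < Suc (x div k) \<Longrightarrow> grundy_window k x ! d = grundy k (x - d)"
  unfolding grundy_window_def by (simp del: upt_Suc)

lemma grundy_window_Suc_not_dvd:
  assumes "\<not> k dvd Suc y"
  shows "grundy_window k y = rotate1 (grundy_window k (Suc y))"
proof (rule nth_equalityI)
  note q = Suc_div_not_dvd[OF assms]
  show "length (grundy_window k y) = length (rotate1 (grundy_window k (Suc y)))"
    by (simp add: length_grundy_window q)
  fix i assume "i < length (grundy_window k y)"
  then have i: "i < Suc (y div k)" by (simp add: length_grundy_window)
  show "grundy_window k y ! i = rotate1 (grundy_window k (Suc y)) ! i"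
  proof (cases "i = y div k")
    case True
    then show ?thesis
      using grundy_Suc_not_dvd[OF assms]
      by (simp add: nth_rotate1 length_grundy_window nth_grundy_window q)
  next
    case False
    then have "Suc i < Suc (y div k)" using i by simp
    then show ?thesis
      using i nth_grundy_window[of "Suc i" "Suc y" k]
      by (simp add: nth_rotate1 length_grundy_window nth_grundy_window q)
  qed
qed

lemma grundy_window_rotate_block:
  assumes "r < k"
  shows "grundy_window k (j * k) = rotate r (grundy_window k (j * k + r))"
  using assms
proof (induction r)
  case (Suc r)
  have "\<not> k dvd Suc (j * k + r)"
  proof
    assume "k dvd Suc (j * k + r)"
    then have "k dvd Suc r" by (metis add_Suc_right dvd_add_right_iff dvd_triv_right)
    then show False using Suc.prems by (simp add: nat_dvd_not_less)
  qed
  then have "grundy_window k (j * k + r) = rotate1 (grundy_window k (j * k + Suc r))"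
    using grundy_window_Suc_not_dvd by simp
  then show ?case
    using Suc by (simp add: rotate1_rotate_swap)
qed simp

lemma mult_minus_one_div:
  fixes j k :: nat
  assumes "k \<ge> 1" and "j \<ge> 1"
  shows "(j * k - 1) div k = j - 1"
proof -
  obtain i where j: "j = Suc i" using assms(2) by (cases j) auto
  have "j * k - 1 = (k - 1) + k * i" using assms(1) unfolding j by (simp add: mult.commute)
  moreover have "((k - 1) + k * i) div k = i + (k - 1) div k"
    using assms(1) by (intro div_mult_self2) simp
  ultimately show ?thesis using assms(1) j by simp
qed

lemma grundy_window_multiple:
  assumes k: "k \<ge> 1" and j: "j \<ge> 1"
  shows "grundy_window k (j * k) = j # grundy_window k (j * k - 1)"
proof (rule nth_equalityI)
  have "j * k div k = j" using k by simp
  then have q: "j * k div k = Suc ((j * k - 1) div k)"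
    using mult_minus_one_div[OF k j] j by linarith
  show "length (grundy_window k (j * k)) = length (j # grundy_window k (j * k - 1))"
    by (simp add: length_grundy_window q)
  fix i assume "i < length (grundy_window k (j * k))"
  then have i: "i < Suc (j * k div k)" by (simp add: length_grundy_window)
  show "grundy_window k (j * k) ! i = (j # grundy_window k (j * k - 1)) ! i"
  proof (cases i)
    case 0
    then show ?thesis using k by (simp add: nth_grundy_window grundy_multiple)
  next
    case (Suc i')
    then have "i' < Suc ((j * k - 1) div k)" using i q by simp
    then have "grundy_window k (j * k - 1) ! i' = grundy k (j * k - Suc i')"
      by (simp add: nth_grundy_window)
    then show ?thesis
      using Suc i by (simp add: nth_grundy_window)
  qed
qed

section \<open>Josephus elimination\<close>

lemma jos_removed_short: "length xs \<le> 1 \<Longrightarrow> jos_removed k xs = []"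
  by (simp add: jos_removed.simps)

lemma jos_removed_rotate:
  assumes "1 < length xs" and "rotate (k - 1) xs = y # ys"
  shows "jos_removed k xs = y # jos_removed k ys"
proof -
  define i where "i = (k - 1) mod length xs"
  have i: "i < length xs" unfolding i_def using assms(1) by (intro mod_less_divisor) linarith
  have "drop i xs @ take i xs = y # ys"
    using assms(2) by (simp add: rotate_drop_take i_def)
  moreover have "drop i xs = xs ! i # drop (Suc i) xs"
    using i by (simp add: Cons_nth_drop_Suc)
  ultimately have "xs ! i = y" "drop (Suc i) xs @ take i xs = ys" by simp_all
  then show ?thesis
    using assms(1) by (subst jos_removed.simps) (simp add: i_def Let_def)
qed

lemma jos_removed_map: "jos_removed k (map h xs) = map h (jos_removed k xs)"
proof (induction k xs rule: jos_removed.induct)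
  case (1 k xs)
  show ?case
  proof (cases "length xs \<le> 1")
    case False
    define i where "i = (k - 1) mod length xs"
    have "i < length xs" unfolding i_def using False by (intro mod_less_divisor) linarith
    then show ?thesis
      using 1 False by (subst (1 2) jos_removed.simps) (simp add: i_def Let_def drop_map take_map)
  qed (simp add: jos_removed_short)
qed

lemma set_jos_removed_subset: "set (jos_removed k xs) \<subseteq> set xs"
proof (induction k xs rule: jos_removed.induct)
  case (1 k xs)
  show ?case
  proof (cases "length xs \<le> 1")
    case False
    define i where "i = (k - 1) mod length xs"
    have "i < length xs" unfolding i_def using False by (intro mod_less_divisor) linarith
    moreover have "set (jos_removed k (drop (Suc i) xs @ take i xs)) \<subseteq> set xs"
      using 1 False i_def set_drop_subset set_take_subset by fastforce
    ultimately show ?thesis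
      using False by (subst jos_removed.simps) (simp add: i_def Let_def)
  qed (simp add: jos_removed_short)
qed

lemma jos_order_eq_of_map_removed:
  assumes bij: "bij_betw h {1..n} {0..<n}"
    and removed: "map h (jos_removed k [1..<Suc n]) = rev [1..<n]"
    and m: "m \<in> {1..n}"
  shows "n - jos_order k n m = h m"
proof -
  define r where "r = jos_removed k [1..<Suc n]"
  have map_r: "map h r = rev [1..<n]" using removed unfolding r_def .
  show ?thesis
  proof (cases "m \<in> set r")
    case True
    define i where "i = (LEAST i. i < length r \<and> r ! i = m)"
    have "\<exists>i. i < length r \<and> r ! i = m" using True by (simp add: in_set_conv_nth)
    then have "i < length r \<and> r ! i = m" unfolding i_def by (rule LeastI_ex)
    moreover have "length r = n - 1" using arg_cong[OF map_r, of length] by simp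
    ultimately have i: "i < n - 1" "r ! i = m" by simp_all
    have "h m = map h r ! i" using i \<open>length r = n - 1\<close> by simp
    also have "\<dots> = n - 1 - i" using i by (simp add: map_r rev_nth)
    finally have "h m = n - 1 - i" .
    moreover have "jos_order k n m = Suc i"
      unfolding jos_order_def Let_def r_def[symmetric] i_def using True by simp
    ultimately show ?thesis by simp
  next
    case False
    have "set r \<subseteq> {1..n}"
      using set_jos_removed_subset[of k "[1..<Suc n]"] unfolding r_def by auto
    then have "h m \<notin> h ` set r"
      using False m bij_betw_imp_inj_on[OF bij] by (simp add: inj_on_image_mem_iff)
    moreover have "h ` set r = {1..<n}" using arg_cong[OF map_r, of set] by simp
    moreover have "h m < n" using bij_betw_apply[OF bij m] by simp
    moreover have "jos_order k n m = n"
      unfolding jos_order_def Let_def r_def[symmetric] using False by simp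
    ultimately show ?thesis by simp
  qed
qed

lemma jos_removed_grundy_window:
  assumes k: "k \<ge> 1" and j: "j \<ge> 1"
  shows "jos_removed k (grundy_window k (j * k - 1)) = rev [1..<j]"
  using j
proof (induction j rule: dec_induct)
  case base
  then show ?case
    using length_grundy_window[of k "k - 1"] k by (simp add: jos_removed_short)
next
  case (step j)
  have "rotate (k - 1) (grundy_window k (Suc j * k - 1)) = grundy_window k (j * k)"
    using grundy_window_rotate_block[of "k - 1" k j] k by (simp add: add.commute)
  also have "\<dots> = j # grundy_window k (j * k - 1)"
    using grundy_window_multiple[OF k step.hyps(1)] .
  finally show ?case
    using jos_removed_rotate step length_grundy_window[of k "Suc j * k - 1"]
      mult_minus_one_div[OF k, of "Suc j"] by simp
qed

lemma grundy_window_last_block: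
  assumes k: "k \<ge> 1" and n: "n \<ge> 1"
  shows "grundy_window k (n * k - 1) = map (\<lambda>m. grundy k (n * k - m)) [1..<Suc n]"
proof (rule nth_equalityI)
  note q = mult_minus_one_div[OF k n]
  show "length (grundy_window k (n * k - 1)) = length (map (\<lambda>m. grundy k (n * k - m)) [1..<Suc n])"
    using q n by (simp add: length_grundy_window)
  fix i assume "i < length (grundy_window k (n * k - 1))"
  then have "i < Suc ((n * k - 1) div k)" "i < n"
    using q n by (simp_all add: length_grundy_window)
  then show "grundy_window k (n * k - 1) ! i = map (\<lambda>m. grundy k (n * k - m)) [1..<Suc n] ! i"
    by (simp add: nth_grundy_window del: upt_Suc)
qed

lemma bij_betw_diff_right:
  fixes N n :: nat
  assumes "n \<le> N"
  shows "bij_betw (\<lambda>m. N - m) {1..n} {N - n..<N}"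
proof (rule bij_betw_imageI)
  show "inj_on (\<lambda>m. N - m) {1..n}"
    using assms by (auto intro!: inj_onI)
  show "(\<lambda>m. N - m) ` {1..n} = {N - n..<N}"
  proof (intro equalityI subsetI)
    fix y assume "y \<in> {N - n..<N}"
    then have "N - y \<in> {1..n}" "y = N - (N - y)" using assms by auto
    then show "y \<in> (\<lambda>m. N - m) ` {1..n}" by blast
  qed (use assms in auto)
qed

lemma bij_betw_grundy_last_block:
  assumes k: "k \<ge> 1" and n: "n \<ge> 1"
  shows "bij_betw (\<lambda>m. grundy k (n * k - m)) {1..n} {0..<n}"
proof -
  define N where "N = n * k"
  have "n \<le> N" using k unfolding N_def by simp
  have q: "(N - 1) div k = n - 1" unfolding N_def by (rule mult_minus_one_div[OF k n])
  have "{N - 1 - (N - 1) div k..N - 1} = {N - n..<N}" and "{0..(N - 1) div k} = {0..<n}"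
    using q n \<open>n \<le> N\<close> by auto
  then have "bij_betw (grundy k) {N - n..<N} {0..<n}"
    using bij_betw_grundy_window[of k "N - 1"] by simp
  from bij_betw_trans[OF bij_betw_diff_right[OF \<open>n \<le> N\<close>] this]
  show ?thesis unfolding N_def by (simp add: comp_def)
qed

theorem theorem2:
  fixes k n m :: nat
  assumes "k \<ge> 2" and "1 \<le> m" and "m \<le> n"
  shows "n - jos_order k n m = grundy k (n * k - m)"
proof -
  \<comment> \<open>The argument only uses k \<ge> 1.\<close>
  have k: "k \<ge> 1" and n: "n \<ge> 1" using assms by simp_all
  have "map (\<lambda>m. grundy k (n * k - m)) (jos_removed k [1..<Suc n]) = rev [1..<n]"
    using jos_removed_grundy_window[OF k n]
    unfolding grundy_window_last_block[OF k n] jos_removed_map .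
  then show ?thesis
    using jos_order_eq_of_map_removed bij_betw_grundy_last_block[OF k n] assms by simp
qed

end
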